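(* Every Gaussian distribution on $\mathbb{R}^n$ satisfies $\mathrm{IC}(1)$.
   Context: For functions $f,g:\mathbb{R}^n\to(-\infty,\infty]$ the infimum convolution is $\inf_{y\in\mathbb{R}^n}\{f(x-y)+g(y)\}$. A pair $(\mu,W)$, with $\mu$ a probability measure on $\mathbb{R}^n$ and $W:\mathbb{R}^n\to[0,\infty]$, satisfies property $(\tau)$ if for every bounded function $f$, $\int e^{h}\,d\mu\int e^{-f}\,d\mu\le 1$, where $h(x)=\inf_{y}\{W(x-y)+f(y)\}$. For a measure $\mu$, $\mu'$ is its reflection through the origin, $\overline{\mu}=\mu*\mu'$, $\Lambda_\mu=\ln M_\mu$ with $M_\mu(x)=\int e^{\langle x,y\rangle}d\mu(y)$, and $\Lambda^*_\mu(x)=\sup_y\{\langle x,y\rangle-\Lambda_\mu(y)\}$ is the Cramer transform. A probability measure $\mu$ satisfies $\mathrm{IC}(\beta)$ ($\beta>0$) if the pair $(\mu,\Lambda^*_{\overline{\mu}}(\cdot/\beta))$ satisfies property $(\tau)$. *)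

theory Defs
  imports "HOL-Probability.Probability"
begin

definition eexp :: "ereal \<Rightarrow> ennreal" where
  "eexp t = (if t = \<infinity> then \<infinity> else if t = - \<infinity> then 0 else ennreal (exp (real_of_ereal t)))"

definition outer_nn_integral :: "'a measure \<Rightarrow> ('a \<Rightarrow> ennreal) \<Rightarrow> ennreal" where
  "outer_nn_integral M f =
     (INF g \<in> {g \<in> borel_measurable M. \<forall>x\<in>space M. f x \<le> g x}. nn_integral M g)"

definition inf_conv :: "('a::ab_group_add \<Rightarrow> ereal) \<Rightarrow> ('a \<Rightarrow> ereal) \<Rightarrow> 'a \<Rightarrow> ereal" where
  "inf_conv f g x = (INF y. f (x - y) + g y)"

definition property_tau :: "'a::euclidean_space measure \<Rightarrow> ('a \<Rightarrow> ereal) \<Rightarrow> bool" where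
  "property_tau \<mu> W \<longleftrightarrow>
     (\<forall>f :: 'a \<Rightarrow> real. f \<in> borel_measurable borel \<longrightarrow> bounded (range f) \<longrightarrow>
        outer_nn_integral \<mu> (\<lambda>x. eexp (inf_conv W (\<lambda>y. ereal (f y)) x))
          * (\<integral>\<^sup>+ x. ennreal (exp (- f x)) \<partial>\<mu>) \<le> 1)"

definition reflect :: "'a::euclidean_space measure \<Rightarrow> 'a measure" where
  "reflect \<mu> = distr \<mu> borel uminus"

definition symmetrization :: "'a::euclidean_space measure \<Rightarrow> 'a measure" where
  "symmetrization \<mu> = distr (\<mu> \<Otimes>\<^sub>M reflect \<mu>) borel (\<lambda>(x, y). x + y)"

definition mgf :: "'a::euclidean_space measure \<Rightarrow> 'a \<Rightarrow> ennreal" where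
  "mgf \<mu> x = (\<integral>\<^sup>+ y. ennreal (exp (x \<bullet> y)) \<partial>\<mu>)"

definition log_mgf :: "'a::euclidean_space measure \<Rightarrow> 'a \<Rightarrow> ereal" where
  "log_mgf \<mu> x = (if mgf \<mu> x = \<infinity> then \<infinity> else ereal (ln (enn2real (mgf \<mu> x))))"

definition cramer :: "'a::euclidean_space measure \<Rightarrow> 'a \<Rightarrow> ereal" where
  "cramer \<mu> x = (SUP y. ereal (x \<bullet> y) - log_mgf \<mu> y)"

definition IC :: "real \<Rightarrow> 'a::euclidean_space measure \<Rightarrow> bool" where
  "IC \<beta> \<mu> \<longleftrightarrow> prob_space \<mu> \<and> sets \<mu> = sets borel \<and>
     property_tau \<mu> (\<lambda>x. cramer (symmetrization \<mu>) (x /\<^sub>R \<beta>))"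

definition std_gaussian :: "'a::euclidean_space measure" where
  "std_gaussian = density lborel
     (\<lambda>x::'a. ennreal ((2 * pi) powr (- real DIM('a) / 2) * exp (- (norm x)\<^sup>2 / 2)))"

text \<open>Gaussian = affine image of the standard Gaussian (possibly degenerate).\<close>
definition gaussian :: "'a::euclidean_space measure \<Rightarrow> bool" where
  "gaussian \<mu> \<longleftrightarrow> (\<exists>A b. linear A \<and> \<mu> = distr (std_gaussian :: 'a measure) borel (\<lambda>x. A x + b))"

end

theory Submission
  imports Defs
begin

text \<open>If \<open>H x \<le> |x - y|\<^sup>2 / 4 + F y\<close> for all \<open>x, y\<close>, the parallelogram identity gives
  \<open>e\<^bsup>H x - |x|\<^sup>2/2\<^esup> e\<^bsup>-F y - |y|\<^sup>2/2\<^esup> \<le> (e\<^bsup>-|(x+y)/2|\<^sup>2/2\<^esup>)\<^sup>2\<close>, so the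
  Prekopa--Leindler inequality yields Maurey's inequality
  \<open>\<integral> e\<^sup>H d\<gamma> \<integral> e\<^bsup>-F\<^esup> d\<gamma> \<le> 1\<close> for the standard Gaussian \<open>\<gamma>\<close>: the pair \<open>(\<gamma>, |\<cdot>|\<^sup>2/4)\<close>
  has property \<open>(\<tau>)\<close>. Prekopa--Leindler itself follows from the one-dimensional
  Brunn--Minkowski inequality \<open>|A| + |B| \<le> 2 |(A + B)/2|\<close> applied to level sets, and is
  tensorised over coordinates.

  A Gaussian \<open>\<mu>\<close> is the image of \<open>\<gamma>\<close> under \<open>u \<mapsto> A u + b\<close>. Its symmetrisation has Laplace
  transform \<open>exp |A\<^sup>T y|\<^sup>2\<close>, so the Cramer transform at \<open>A w\<close> is at most
  \<open>sup\<^sub>z (\<langle>w, z\<rangle> - |z|\<^sup>2) = |w|\<^sup>2/4\<close>. The infimum convolution for \<open>\<mu>\<close> is therefore dominated along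
  the affine map by the Gaussian one for the pulled-back function, and \<open>(\<tau>)\<close> transfers to \<open>\<mu>\<close>.\<close>

section \<open>Brunn--Minkowski on the line\<close>

lemma emeasure_lborel_affine_preimage:
  fixes S :: "real set"
  assumes S[measurable]: "S \<in> sets borel" and c: "c \<noteq> 0"
  shows "emeasure lborel S = ennreal \<bar>c\<bar> * emeasure lborel {x. t + c * x \<in> S}"
proof -
  have "emeasure lborel S = (\<integral>\<^sup>+x. indicator S x \<partial>lborel)"
    by simp
  also have "\<dots> = ennreal \<bar>c\<bar> * (\<integral>\<^sup>+x. indicator S (t + c * x) \<partial>lborel)"
    using c by (intro nn_integral_real_affine) auto
  also have "(\<lambda>x. indicator S (t + c * x) :: ennreal) = indicator {x. t + c * x \<in> S}"
    by (auto simp: indicator_def)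
  finally show ?thesis
    by simp
qed

text \<open>\<open>(A \<inter> {..k} + l) / 2\<close> and \<open>(k + B \<inter> {l<..}) / 2\<close> lie in \<open>C\<close>, on either side of \<open>(k + l) / 2\<close>.\<close>

lemma emeasure_segments_le_midpoint_set:
  fixes A B C :: "real set"
  assumes [measurable]: "A \<in> sets borel" "B \<in> sets borel" "C \<in> sets borel"
    and k: "k \<in> A" and l: "l \<in> B" and mid: "\<And>x y. x \<in> A \<Longrightarrow> y \<in> B \<Longrightarrow> (x + y) / 2 \<in> C"
  shows "emeasure lborel (A \<inter> {..k}) + emeasure lborel (B \<inter> {l..}) \<le> 2 * emeasure lborel C"
proof -
  define m where "m = (k + l) / 2"
  define C\<^sub>1 where "C\<^sub>1 = {x. l/2 + 1/2 * x \<in> C \<inter> {..m}}"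
  define C\<^sub>2 where "C\<^sub>2 = {x. k/2 + 1/2 * x \<in> C \<inter> {m<..}}"
  have [measurable]: "C\<^sub>1 \<in> sets borel" "C\<^sub>2 \<in> sets borel"
    by (simp_all add: C\<^sub>1_def C\<^sub>2_def)
  have "emeasure lborel (B \<inter> {l..}) \<le> emeasure lborel (B \<inter> {l<..} \<union> {l})"
    by (rule emeasure_mono) auto
  also have "\<dots> \<le> emeasure lborel (B \<inter> {l<..}) + emeasure lborel {l}"
    by (rule emeasure_subadditive) auto
  finally have "emeasure lborel (B \<inter> {l..}) \<le> emeasure lborel (B \<inter> {l<..})"
    by simp
  moreover have "A \<inter> {..k} \<subseteq> C\<^sub>1" "B \<inter> {l<..} \<subseteq> C\<^sub>2"
    using mid[OF _ l] mid[OF k] by (auto simp: C\<^sub>1_def C\<^sub>2_def m_def add_divide_distrib add.commute)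
  then have "emeasure lborel (A \<inter> {..k}) \<le> emeasure lborel C\<^sub>1"
      "emeasure lborel (B \<inter> {l<..}) \<le> emeasure lborel C\<^sub>2"
    by (auto intro: emeasure_mono)
  ultimately have "emeasure lborel (A \<inter> {..k}) + emeasure lborel (B \<inter> {l..})
      \<le> emeasure lborel C\<^sub>1 + emeasure lborel C\<^sub>2"
    by (meson add_mono order_trans)
  also have "\<dots> = 2 * emeasure lborel (C \<inter> {..m}) + 2 * emeasure lborel (C \<inter> {m<..})"
  proof -
    have "ennreal 2 * ennreal \<bar>1/2\<bar> = ennreal (2 * \<bar>1/2\<bar>)"
      by (rule ennreal_mult[symmetric]) auto
    then have half: "2 * (ennreal \<bar>1/2\<bar> * X) = X" for X :: ennreal
      by (simp add: mult.assoc[symmetric])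
    have "emeasure lborel (C \<inter> {..m}) = ennreal \<bar>1/2\<bar> * emeasure lborel C\<^sub>1"
      "emeasure lborel (C \<inter> {m<..}) = ennreal \<bar>1/2\<bar> * emeasure lborel C\<^sub>2"
      unfolding C\<^sub>1_def C\<^sub>2_def by (rule emeasure_lborel_affine_preimage; simp)+
    then show ?thesis
      by (simp only: half)
  qed
  also have "\<dots> = 2 * emeasure lborel (C \<inter> {..m} \<union> C \<inter> {m<..})"
    by (subst plus_emeasure[symmetric]) (auto simp: distrib_left)
  also have "C \<inter> {..m} \<union> C \<inter> {m<..} = C"
    by auto
  finally show ?thesis .
qed

lemma incseq_exhausting_no_max:
  fixes A :: "real set"
  assumes ne: "A \<noteq> {}" and no_max: "\<And>k. k \<in> A \<Longrightarrow> \<exists>x\<in>A. k < x"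
  obtains t :: "nat \<Rightarrow> real" where "incseq t" "\<And>n. \<exists>k\<in>A. t n \<le> k" "A \<subseteq> (\<Union>n. {..t n})"
proof (cases "bdd_above A")
  case True
  define t where "t n = Sup A - inverse (real (Suc n))" for n
  have "incseq t"
    unfolding t_def by (intro incseq_SucI) (simp add: field_simps)
  moreover have "\<exists>k\<in>A. t n \<le> k" for n
    using less_cSup_iff[OF ne True, of "t n"] by (auto simp: t_def intro: less_imp_le)
  moreover have "A \<subseteq> (\<Union>n. {..t n})"
  proof
    fix x assume x: "x \<in> A"
    obtain y where "y \<in> A" "x < y"
      using no_max[OF x] by blast
    then have "0 < Sup A - x"
      using cSup_upper[OF _ True] by fastforce
    then obtain n where "inverse (real (Suc n)) < Sup A - x"
      using reals_Archimedean by blast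
    then show "x \<in> (\<Union>n. {..t n})"
      by (auto simp: t_def intro!: exI[of _ n])
  qed
  ultimately show ?thesis
    using that by blast
next
  case False
  have "\<exists>k\<in>A. real n \<le> k" for n
    using False unfolding bdd_above_def by (auto simp: not_le intro: less_imp_le)
  moreover have "A \<subseteq> (\<Union>n. {..real n})"
    using real_arch_simple by auto
  ultimately show ?thesis
    using that[of real] by (auto simp: incseq_def)
qed

lemma emeasure_le_SUP_emeasure_Iic:
  fixes A :: "real set"
  assumes A[measurable]: "A \<in> sets borel" and ne: "A \<noteq> {}"
  shows "emeasure lborel A \<le> (SUP k\<in>A. emeasure lborel (A \<inter> {..k}))"
proof (cases "\<exists>k\<in>A. \<forall>x\<in>A. x \<le> k")
  case True
  then obtain k where "k \<in> A" "A \<inter> {..k} = A"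
    by auto
  then show ?thesis
    by (metis SUP_upper)
next
  case False
  then obtain t where t: "incseq t" "\<And>n. \<exists>k\<in>A. t n \<le> k" "A \<subseteq> (\<Union>n. {..t n})"
    using incseq_exhausting_no_max[OF ne] by (metis not_le)
  have "emeasure lborel A = emeasure lborel (\<Union>n. A \<inter> {..t n})"
    using t(3) by (metis Int_UN_distrib inf.absorb1)
  also have "\<dots> = (SUP n. emeasure lborel (A \<inter> {..t n}))"
    using t(1) by (intro SUP_emeasure_incseq[symmetric]) (auto simp: incseq_def intro: order_trans)
  also have "\<dots> \<le> (SUP k\<in>A. emeasure lborel (A \<inter> {..k}))"
  proof (rule SUP_least)
    fix n
    obtain k where k: "k \<in> A" "t n \<le> k"
      using t(2) by blast
    then have "emeasure lborel (A \<inter> {..t n}) \<le> emeasure lborel (A \<inter> {..k})"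
      by (intro emeasure_mono) auto
    also have "\<dots> \<le> (SUP k\<in>A. emeasure lborel (A \<inter> {..k}))"
      using k(1) by (rule SUP_upper)
    finally show "emeasure lborel (A \<inter> {..t n}) \<le> \<dots>" .
  qed
  finally show ?thesis .
qed

lemma emeasure_le_SUP_emeasure_Ici:
  fixes B :: "real set"
  assumes B[measurable]: "B \<in> sets borel" and ne: "B \<noteq> {}"
  shows "emeasure lborel B \<le> (SUP l\<in>B. emeasure lborel (B \<inter> {l..}))"
proof -
  have reflect: "emeasure lborel S = emeasure lborel {x. - x \<in> S}" if [measurable]: "S \<in> sets borel" for S :: "real set"
    using emeasure_lborel_affine_preimage[of S "-1" 0] by simp
  define B' where "B' = {x. - x \<in> B}"
  have [measurable]: "B' \<in> sets borel"
    by (simp add: B'_def)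
  have "emeasure lborel B = emeasure lborel B'"
    unfolding B'_def by (rule reflect) simp
  also have "\<dots> \<le> (SUP k\<in>B'. emeasure lborel (B' \<inter> {..k}))"
    using ne by (intro emeasure_le_SUP_emeasure_Iic) (auto simp: B'_def intro: exI[of _ "- x" for x])
  also have "\<dots> = (SUP k\<in>B'. emeasure lborel (B \<inter> {-k..}))"
    by (intro SUP_cong refl, subst reflect) (auto simp: B'_def intro: arg_cong[where f = "emeasure lborel"])
  also have "\<dots> \<le> (SUP l\<in>B. emeasure lborel (B \<inter> {l..}))"
    by (intro SUP_least SUP_upper) (simp add: B'_def)
  finally show ?thesis .
qed

lemma brunn_minkowski_midpoint_real:
  fixes A B C :: "real set"
  assumes "A \<in> sets borel" "B \<in> sets borel" "C \<in> sets borel" "A \<noteq> {}" "B \<noteq> {}"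
    and mid: "\<And>x y. x \<in> A \<Longrightarrow> y \<in> B \<Longrightarrow> (x + y) / 2 \<in> C"
  shows "emeasure lborel A + emeasure lborel B \<le> 2 * emeasure lborel C"
proof -
  have "emeasure lborel A + emeasure lborel B \<le>
     (SUP k\<in>A. emeasure lborel (A \<inter> {..k})) + (SUP l\<in>B. emeasure lborel (B \<inter> {l..}))"
    using assms by (intro add_mono emeasure_le_SUP_emeasure_Iic emeasure_le_SUP_emeasure_Ici)
  also have "\<dots> = (SUP k\<in>A. SUP l\<in>B. emeasure lborel (A \<inter> {..k}) + emeasure lborel (B \<inter> {l..}))"
    using assms by (subst ennreal_SUP_add_left[symmetric]) (simp_all add: ennreal_SUP_add_right)
  also have "\<dots> \<le> 2 * emeasure lborel C"
    using assms by (intro SUP_least emeasure_segments_le_midpoint_set) auto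
  finally show ?thesis .
qed

section \<open>The Prekopa--Leindler inequality\<close>

lemma emeasure_lborel_nonneg_less_ennreal:
  "emeasure lborel {r::real. 0 \<le> r \<and> ennreal r < v} = v"
proof (cases v rule: ennreal_cases)
  case (real w)
  then have "{r. 0 \<le> r \<and> ennreal r < v} = {0..<w}"
    by (auto simp: ennreal_less_iff)
  then show ?thesis
    using real by simp
next
  case top
  have "emeasure lborel {0..<real n} \<le> emeasure lborel {0::real..}" for n
    by (rule emeasure_mono) auto
  then have "(SUP n. of_nat n :: ennreal) \<le> emeasure lborel {0::real..}"
    by (intro SUP_least) (simp add: ennreal_of_nat_eq_real_of_nat)
  then have "emeasure lborel {0::real..} = \<infinity>"
    by (simp add: ennreal_SUP_of_nat_eq_top top_unique)
  moreover have "{r. 0 \<le> r \<and> ennreal r < v} = {0::real..}"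
    using top by auto
  ultimately show ?thesis
    using top by simp
qed

lemma nn_integral_layer_cake_lborel:
  fixes g :: "real \<Rightarrow> ennreal"
  assumes [measurable]: "g \<in> borel_measurable borel"
  shows "(\<integral>\<^sup>+x. g x \<partial>lborel) = (\<integral>\<^sup>+r. indicator {0..} r * emeasure lborel {x. ennreal r < g x} \<partial>lborel)"
proof -
  have level: "(\<integral>\<^sup>+r. indicator {0..} r * indicator {r. ennreal r < v} r \<partial>lborel) = v" for v
  proof -
    have "(\<lambda>r. indicator {0..} r * indicator {r. ennreal r < v} r :: ennreal)
        = indicator {r::real. 0 \<le> r \<and> ennreal r < v}"
      by (auto simp: indicator_def)
    then show ?thesis
      by (simp add: emeasure_lborel_nonneg_less_ennreal)
  qed
  have "Measurable.pred (lborel \<Otimes>\<^sub>M lborel) (\<lambda>p::real \<times> real. ennreal (snd p) < g (fst p))"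
    by measurable
  then have integrand: "(\<lambda>(x, r). indicator {0..} r * indicator {r. ennreal r < g x} r :: ennreal)
      \<in> borel_measurable (lborel \<Otimes>\<^sub>M lborel)"
    by (simp add: indicator_def split_beta')
  have "(\<integral>\<^sup>+x. g x \<partial>lborel)
      = (\<integral>\<^sup>+x. \<integral>\<^sup>+r. indicator {0..} r * indicator {r. ennreal r < g x} r \<partial>lborel \<partial>lborel)"
    by (simp add: level)
  also have "\<dots> = (\<integral>\<^sup>+r. \<integral>\<^sup>+x. indicator {0..} r * indicator {r. ennreal r < g x} r \<partial>lborel \<partial>lborel)"
    using lborel_pair.Fubini'[OF integrand] by simp
  also have "\<dots> = (\<integral>\<^sup>+r. indicator {0..} r * emeasure lborel {x. ennreal r < g x} \<partial>lborel)"
  proof (rule nn_integral_cong)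
    fix r :: real
    have "(\<lambda>x. indicator {r. ennreal r < g x} r :: ennreal) = indicator {x. ennreal r < g x}"
      by (auto simp: indicator_def)
    then show "(\<integral>\<^sup>+x. indicator {0..} r * indicator {r. ennreal r < g x} r \<partial>lborel)
        = indicator {0..} r * emeasure lborel {x. ennreal r < g x}"
      using nn_integral_indicator[of "{x. ennreal r < g x}" lborel] by (simp add: nn_integral_cmult)
  qed
  finally show ?thesis .
qed

lemma borel_measurable_emeasure_level_sets:
  fixes f :: "real \<Rightarrow> ennreal"
  assumes [measurable]: "f \<in> borel_measurable borel"
  shows "(\<lambda>r. emeasure lborel {x. ennreal r < f x}) \<in> borel_measurable borel"
proof -
  have "Measurable.pred (lborel \<Otimes>\<^sub>M lborel) (\<lambda>p::real \<times> real. ennreal (fst p) < f (snd p))"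
    by measurable
  then have "(\<lambda>r. emeasure lborel {x. ennreal r < f x}) \<in> borel_measurable lborel"
    by (intro lborel.measurable_emeasure) (auto simp: pred_def space_pair_measure)
  then show ?thesis
    by simp
qed

text \<open>Layer cake: each level set of \<open>k\<close> contains the midpoints of the corresponding level sets of
  \<open>p\<close> and \<open>q\<close>; Brunn--Minkowski needs these nonempty for every level below the common supremum.\<close>

lemma prekopa_leindler_real_sum:
  fixes p q :: "real \<Rightarrow> real" and k :: "real \<Rightarrow> ennreal"
  assumes [measurable]: "p \<in> borel_measurable borel" "q \<in> borel_measurable borel" "k \<in> borel_measurable borel"
    and p_le: "\<And>x. p x \<le> s" and q_le: "\<And>x. q x \<le> s"
    and p_sup: "\<And>r. 0 \<le> r \<Longrightarrow> r < s \<Longrightarrow> \<exists>x. r < p x"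
    and q_sup: "\<And>r. 0 \<le> r \<Longrightarrow> r < s \<Longrightarrow> \<exists>x. r < q x"
    and mid: "\<And>x y. ennreal (p x * q y) \<le> k ((x + y) / 2) ^ 2"
  shows "(\<integral>\<^sup>+x. ennreal (p x) \<partial>lborel) + (\<integral>\<^sup>+x. ennreal (q x) \<partial>lborel) \<le> 2 * (\<integral>\<^sup>+x. k x \<partial>lborel)"
proof -
  let ?m = "\<lambda>h r. emeasure lborel {x. ennreal r < h x}"
  have ennreal_pq: "(\<lambda>x. ennreal (p x)) \<in> borel_measurable borel" "(\<lambda>x. ennreal (q x)) \<in> borel_measurable borel"
    by measurable
  have [measurable]: "?m (\<lambda>x. ennreal (p x)) \<in> borel_measurable borel"
      "?m (\<lambda>x. ennreal (q x)) \<in> borel_measurable borel" "?m k \<in> borel_measurable borel"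
    by (intro borel_measurable_emeasure_level_sets; measurable)+
  have levels: "?m (\<lambda>x. ennreal (p x)) r + ?m (\<lambda>x. ennreal (q x)) r \<le> 2 * ?m k r" if "0 \<le> r" for r
  proof (cases "r < s")
    case True
    have ennreal_levels: "{x. ennreal r < ennreal (h x)} = {x. r < h x}" for h :: "real \<Rightarrow> real"
      using \<open>0 \<le> r\<close> by (auto simp: ennreal_less_iff)
    show ?thesis
      unfolding ennreal_levels
    proof (rule brunn_minkowski_midpoint_real)
      show "{x. r < p x} \<noteq> {}" "{x. r < q x} \<noteq> {}"
        using p_sup[OF that True] q_sup[OF that True] by auto
      fix x y assume "x \<in> {x. r < p x}" "y \<in> {x. r < q x}"
      then have "r * r < p x * q y"
        using that by (intro mult_strict_mono) auto
      then have "ennreal r ^ 2 < ennreal (p x * q y)"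
        using that by (simp add: power2_eq_square ennreal_less_iff flip: ennreal_mult)
      also have "\<dots> \<le> k ((x + y) / 2) ^ 2"
        by (rule mid)
      finally have "ennreal r ^ 2 < k ((x + y) / 2) ^ 2" .
      then have "ennreal r < k ((x + y) / 2)"
        by (meson power_mono zero_le not_le)
      then show "(x + y) / 2 \<in> {x. ennreal r < k x}"
        by simp
    qed measurable
  next
    case False
    then have "{x. ennreal r < ennreal (h x)} = {}" if "\<And>x. h x \<le> s" for h :: "real \<Rightarrow> real"
      using that by (auto simp: not_less intro: ennreal_leI order_trans)
    then show ?thesis
      using p_le q_le by simp
  qed
  have "(\<integral>\<^sup>+x. ennreal (p x) \<partial>lborel) + (\<integral>\<^sup>+x. ennreal (q x) \<partial>lborel)
      = (\<integral>\<^sup>+r. indicator {0..} r * ?m (\<lambda>x. ennreal (p x)) r + indicator {0..} r * ?m (\<lambda>x. ennreal (q x)) r \<partial>lborel)"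
    unfolding nn_integral_layer_cake_lborel[OF ennreal_pq(1)] nn_integral_layer_cake_lborel[OF ennreal_pq(2)]
    by (rule nn_integral_add[symmetric]) measurable
  also have "\<dots> \<le> (\<integral>\<^sup>+r. 2 * (indicator {0..} r * ?m k r) \<partial>lborel)"
    using levels by (intro nn_integral_mono) (auto simp: indicator_def)
  also have "\<dots> = 2 * (\<integral>\<^sup>+x. k x \<partial>lborel)"
    unfolding nn_integral_layer_cake_lborel[of k, OF \<open>k \<in> borel_measurable borel\<close>]
    by (rule nn_integral_cmult) measurable
  finally show ?thesis .
qed

lemma ennreal_mult_le_square_if_add_le:
  fixes a b X :: ennreal
  assumes "a + b \<le> 2 * X"
  shows "a * b \<le> X ^ 2"
proof -
  have amgm: "4 * (a * b) \<le> (a + b) ^ 2"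
  proof (cases a; cases b)
    fix x y :: real assume "0 \<le> x" "0 \<le> y" and ab: "a = ennreal x" "b = ennreal y"
    have "4 * (x * y) \<le> (x + y) ^ 2"
      using sum_power2_ge_zero[of "x - y" 0] by (simp add: power2_eq_square algebra_simps)
    then have "ennreal (4 * (x * y)) \<le> ennreal ((x + y) ^ 2)"
      by (rule ennreal_leI)
    then show ?thesis
      using \<open>0 \<le> x\<close> \<open>0 \<le> y\<close> ab by (simp add: ennreal_mult ennreal_power[symmetric] ennreal_plus)
  qed (simp_all add: top_unique)
  also have "\<dots> \<le> (2 * X) ^ 2"
    using assms by (intro power_mono) auto
  also have "\<dots> = 4 * X ^ 2"
    by (simp add: power_mult_distrib)
  finally show ?thesis
    by (subst (asm) ennreal_mult_le_mult_iff) auto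
qed

lemma nn_integral_mult_rescale:
  fixes p q :: "'a \<Rightarrow> real"
  assumes [measurable]: "p \<in> borel_measurable M" "q \<in> borel_measurable M"
    and "0 < c" "\<And>x. 0 \<le> p x" "\<And>x. 0 \<le> q x"
  shows "(\<integral>\<^sup>+x. ennreal (c * p x) \<partial>M) * (\<integral>\<^sup>+x. ennreal (q x / c) \<partial>M)
    = (\<integral>\<^sup>+x. ennreal (p x) \<partial>M) * (\<integral>\<^sup>+x. ennreal (q x) \<partial>M)"
proof -
  have "(\<integral>\<^sup>+x. ennreal (c * p x) \<partial>M) = ennreal c * (\<integral>\<^sup>+x. ennreal (p x) \<partial>M)"
    using assms by (simp add: ennreal_mult nn_integral_cmult[symmetric])
  moreover have "(\<integral>\<^sup>+x. ennreal (q x / c) \<partial>M) = ennreal (1 / c) * (\<integral>\<^sup>+x. ennreal (q x) \<partial>M)"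
    using assms by (simp add: ennreal_mult nn_integral_cmult[symmetric] divide_inverse mult.commute)
  moreover have "ennreal c * ennreal (1 / c) = 1"
    using \<open>0 < c\<close> by (simp flip: ennreal_mult)
  ultimately show ?thesis
    by (metis mult.assoc mult.left_commute mult_1)
qed

lemma prekopa_leindler_real_bounded:
  fixes p q :: "real \<Rightarrow> real" and k :: "real \<Rightarrow> ennreal"
  assumes [measurable]: "p \<in> borel_measurable borel" "q \<in> borel_measurable borel" "k \<in> borel_measurable borel"
    and p0: "\<And>x. 0 \<le> p x" and q0: "\<And>x. 0 \<le> q x"
    and p_le: "\<And>x. p x \<le> M" and q_le: "\<And>x. q x \<le> M"
    and mid: "\<And>x y. ennreal (p x * q y) \<le> k ((x + y) / 2) ^ 2"
  shows "(\<integral>\<^sup>+x. ennreal (p x) \<partial>lborel) * (\<integral>\<^sup>+x. ennreal (q x) \<partial>lborel) \<le> (\<integral>\<^sup>+x. k x \<partial>lborel) ^ 2"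
proof -
  define P where "P = (SUP x. p x)"
  define Q where "Q = (SUP x. q x)"
  have bdd: "bdd_above (range p)" "bdd_above (range q)"
    using p_le q_le by (intro bdd_aboveI2; auto)+
  have pP: "p x \<le> P" and qQ: "q x \<le> Q" for x
    unfolding P_def Q_def using bdd by (auto intro: cSUP_upper)
  show ?thesis
  proof (cases "P = 0 \<or> Q = 0")
    case True
    then have "(\<forall>x. p x = 0) \<or> (\<forall>x. q x = 0)"
      using pP qQ p0 q0 by (metis order_antisym)
    then show ?thesis
      by auto
  next
    case False
    then have "0 < P" "0 < Q"
      using pP[of 0] p0[of 0] qQ[of 0] q0[of 0] by linarith+
    txt \<open>Rescaling \<open>p\<close> by \<open>c\<close> and \<open>q\<close> by \<open>1/c\<close> makes both suprema equal to \<open>s\<close> without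
      changing the product of the integrals; AM-GM then turns the sum bound into a product bound.\<close>
    define c where "c = sqrt (Q / P)"
    define s where "s = sqrt (P * Q)"
    have c0: "0 < c"
      using \<open>0 < P\<close> \<open>0 < Q\<close> by (simp add: c_def)
    have cP: "c * P = s" and Qc: "Q / c = s"
      using \<open>0 < P\<close> \<open>0 < Q\<close>
      by (simp_all add: c_def s_def real_sqrt_divide real_sqrt_mult field_simps)
    have "(\<integral>\<^sup>+x. ennreal (c * p x) \<partial>lborel) + (\<integral>\<^sup>+x. ennreal (q x / c) \<partial>lborel) \<le> 2 * (\<integral>\<^sup>+x. k x \<partial>lborel)"
    proof (rule prekopa_leindler_real_sum[where s = s])
      show "c * p x \<le> s" "q x / c \<le> s" for x
        using pP[of x] qQ[of x] c0 cP Qc by (metis mult_left_mono divide_right_mono less_imp_le)+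
      show "\<exists>x. r < c * p x" if "r < s" for r
        using that less_cSUP_iff[OF _ bdd(1), of "r / c"] cP c0 by (auto simp: P_def field_simps)
      show "\<exists>x. r < q x / c" if "r < s" for r
        using that less_cSUP_iff[OF _ bdd(2), of "r * c"] Qc c0 by (auto simp: Q_def field_simps)
      show "ennreal (c * p x * (q y / c)) \<le> k ((x + y) / 2) ^ 2" for x y
        using mid[of x y] c0 by simp
    qed measurable
    then have "(\<integral>\<^sup>+x. ennreal (c * p x) \<partial>lborel) * (\<integral>\<^sup>+x. ennreal (q x / c) \<partial>lborel) \<le> (\<integral>\<^sup>+x. k x \<partial>lborel) ^ 2"
      by (rule ennreal_mult_le_square_if_add_le)
    moreover have "(\<integral>\<^sup>+x. ennreal (c * p x) \<partial>lborel) * (\<integral>\<^sup>+x. ennreal (q x / c) \<partial>lborel)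
        = (\<integral>\<^sup>+x. ennreal (p x) \<partial>lborel) * (\<integral>\<^sup>+x. ennreal (q x) \<partial>lborel)"
      by (rule nn_integral_mult_rescale[OF _ _ c0 p0 q0]) measurable
    ultimately show ?thesis
      by simp
  qed
qed

lemma nn_integral_SUP_min_of_nat:
  fixes f :: "'a \<Rightarrow> ennreal"
  assumes [measurable]: "f \<in> borel_measurable M"
  shows "(\<integral>\<^sup>+x. f x \<partial>M) = (SUP n. \<integral>\<^sup>+x. min (f x) (of_nat n) \<partial>M)"
proof -
  have "(SUP n. min (f x) (of_nat n)) = min (f x) (SUP n. of_nat n)" for x
    by (simp add: inf_min[symmetric] inf_SUP)
  then have "(SUP n. min (f x) (of_nat n)) = f x" for x
    by (simp add: ennreal_SUP_of_nat_eq_top)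
  then have "(\<integral>\<^sup>+x. f x \<partial>M) = (\<integral>\<^sup>+x. (SUP n. min (f x) (of_nat n)) \<partial>M)"
    by simp
  also have "\<dots> = (SUP n. \<integral>\<^sup>+x. min (f x) (of_nat n) \<partial>M)"
    by (rule nn_integral_monotone_convergence_SUP)
      (auto intro!: monoI le_funI min.mono simp: measurable_compose)
  finally show ?thesis .
qed

lemma prekopa_leindler_real:
  fixes f g k :: "real \<Rightarrow> ennreal"
  assumes [measurable]: "f \<in> borel_measurable borel" "g \<in> borel_measurable borel" "k \<in> borel_measurable borel"
    and mid: "\<And>x y. f x * g y \<le> k ((x + y) / 2) ^ 2"
  shows "(\<integral>\<^sup>+x. f x \<partial>lborel) * (\<integral>\<^sup>+x. g x \<partial>lborel) \<le> (\<integral>\<^sup>+x. k x \<partial>lborel) ^ 2"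
proof -
  have truncated: "(\<integral>\<^sup>+x. min (f x) (of_nat N) \<partial>lborel) * (\<integral>\<^sup>+x. min (g x) (of_nat N) \<partial>lborel)
      \<le> (\<integral>\<^sup>+x. k x \<partial>lborel) ^ 2" for N
  proof -
    have min_eq_ennreal: "min (h x) (of_nat N) = ennreal (enn2real (min (h x) (of_nat N)))" for h :: "real \<Rightarrow> ennreal" and x
      by (rule ennreal_enn2real[symmetric]) (rule le_less_trans[OF min.cobounded2 of_nat_less_top])
    have bound: "enn2real (min (h x) (of_nat N)) \<le> real N" for h :: "real \<Rightarrow> ennreal" and x
      using enn2real_mono[OF min.cobounded2 of_nat_less_top] by simp
    have "(\<integral>\<^sup>+x. ennreal (enn2real (min (f x) (of_nat N))) \<partial>lborel)
        * (\<integral>\<^sup>+x. ennreal (enn2real (min (g x) (of_nat N))) \<partial>lborel) \<le> (\<integral>\<^sup>+x. k x \<partial>lborel) ^ 2"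
    proof (rule prekopa_leindler_real_bounded[where M = "real N"])
      fix x y
      have "ennreal (enn2real (min (f x) (of_nat N)) * enn2real (min (g y) (of_nat N)))
          = min (f x) (of_nat N) * min (g y) (of_nat N)"
        by (simp add: ennreal_mult flip: min_eq_ennreal)
      also have "\<dots> \<le> k ((x + y) / 2) ^ 2"
        using mid[of x y] by (meson min.cobounded1 mult_mono zero_le order_trans)
      finally show "ennreal (enn2real (min (f x) (of_nat N)) * enn2real (min (g y) (of_nat N)))
          \<le> k ((x + y) / 2) ^ 2" .
    qed (simp_all add: bound)
    then show ?thesis
      by (simp flip: min_eq_ennreal)
  qed
  have "(\<integral>\<^sup>+x. f x \<partial>lborel) * (\<integral>\<^sup>+x. g x \<partial>lborel)
      = (SUP m. SUP n. (\<integral>\<^sup>+x. min (f x) (of_nat n) \<partial>lborel) * (\<integral>\<^sup>+x. min (g x) (of_nat m) \<partial>lborel))"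
    by (simp add: nn_integral_SUP_min_of_nat[of f] nn_integral_SUP_min_of_nat[of g]
        SUP_mult_right_ennreal SUP_mult_left_ennreal)
  also have "\<dots> \<le> (\<integral>\<^sup>+x. k x \<partial>lborel) ^ 2"
  proof (intro SUP_least)
    fix m n :: nat
    have "(\<integral>\<^sup>+x. min (f x) (of_nat n) \<partial>lborel) * (\<integral>\<^sup>+x. min (g x) (of_nat m) \<partial>lborel)
       \<le> (\<integral>\<^sup>+x. min (f x) (of_nat (max n m)) \<partial>lborel) * (\<integral>\<^sup>+x. min (g x) (of_nat (max n m)) \<partial>lborel)"
      by (intro mult_mono nn_integral_mono min.mono) auto
    also have "\<dots> \<le> (\<integral>\<^sup>+x. k x \<partial>lborel) ^ 2"
      by (rule truncated)
    finally show "(\<integral>\<^sup>+x. min (f x) (of_nat n) \<partial>lborel) * (\<integral>\<^sup>+x. min (g x) (of_nat m) \<partial>lborel)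
        \<le> (\<integral>\<^sup>+x. k x \<partial>lborel) ^ 2" .
  qed
  finally show ?thesis .
qed

lemma borel_measurable_nn_integral_fun_upd:
  fixes h :: "('i \<Rightarrow> real) \<Rightarrow> ennreal"
  assumes "finite I" and h: "h \<in> borel_measurable (Pi\<^sub>M (insert i I) (\<lambda>_. lborel))"
  shows "(\<lambda>s. \<integral>\<^sup>+x. h (x(i := s)) \<partial>Pi\<^sub>M I (\<lambda>_. lborel)) \<in> borel_measurable borel"
proof -
  interpret product_sigma_finite "\<lambda>_::'i. lborel :: real measure"
    by standard
  interpret I: sigma_finite_measure "Pi\<^sub>M I (\<lambda>_. lborel :: real measure)"
    using \<open>finite I\<close> by (rule sigma_finite)
  have "(\<lambda>p. (snd p)(i := fst p)) \<in> measurable (lborel \<Otimes>\<^sub>M Pi\<^sub>M I (\<lambda>_. lborel)) (Pi\<^sub>M (insert i I) (\<lambda>_. lborel))"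
    by (rule measurable_fun_upd[where J = I]) auto
  from measurable_comp[OF this h]
  have "(\<lambda>(s, x). h (x(i := s))) \<in> borel_measurable (lborel \<Otimes>\<^sub>M Pi\<^sub>M I (\<lambda>_. lborel))"
    by (simp add: comp_def split_beta')
  then have "(\<lambda>s. \<integral>\<^sup>+x. h (x(i := s)) \<partial>Pi\<^sub>M I (\<lambda>_. lborel)) \<in> borel_measurable lborel"
    by (rule I.borel_measurable_nn_integral)
  then show ?thesis
    by simp
qed

text \<open>Points of \<open>Pi\<^sub>M I\<close> are extensional functions, hence the \<open>restrict\<close> in the midpoint.\<close>

lemma prekopa_leindler_PiM:
  fixes f g k :: "('i \<Rightarrow> real) \<Rightarrow> ennreal"
  assumes "finite I"
    and "f \<in> borel_measurable (Pi\<^sub>M I (\<lambda>_. lborel))" "g \<in> borel_measurable (Pi\<^sub>M I (\<lambda>_. lborel))"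
      "k \<in> borel_measurable (Pi\<^sub>M I (\<lambda>_. lborel))"
    and "\<And>x y. x \<in> space (Pi\<^sub>M I (\<lambda>_. lborel)) \<Longrightarrow> y \<in> space (Pi\<^sub>M I (\<lambda>_. lborel)) \<Longrightarrow>
      f x * g y \<le> k (restrict (\<lambda>j. (x j + y j) / 2) I) ^ 2"
  shows "(\<integral>\<^sup>+x. f x \<partial>Pi\<^sub>M I (\<lambda>_. lborel)) * (\<integral>\<^sup>+x. g x \<partial>Pi\<^sub>M I (\<lambda>_. lborel))
    \<le> (\<integral>\<^sup>+x. k x \<partial>Pi\<^sub>M I (\<lambda>_. lborel)) ^ 2"
  using assms
proof (induction I arbitrary: f g k rule: finite_induct)
  case empty
  then show ?case
    by (simp add: PiM_empty nn_integral_count_space_finite)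
next
  case (insert i I)
  interpret product_sigma_finite "\<lambda>_::'i. lborel :: real measure"
    by standard
  note [measurable] = insert.prems(1-3)
  let ?section = "\<lambda>h s. \<integral>\<^sup>+x. h (x(i := s)) \<partial>Pi\<^sub>M I (\<lambda>_. lborel)"
  have [measurable]: "?section h \<in> borel_measurable borel"
    if "h \<in> borel_measurable (Pi\<^sub>M (insert i I) (\<lambda>_. lborel))" for h :: "('i \<Rightarrow> real) \<Rightarrow> ennreal"
    using borel_measurable_nn_integral_fun_upd[OF insert.hyps(1) that] .
  have [measurable]: "(\<lambda>x. x(i := u)) \<in> measurable (Pi\<^sub>M I (\<lambda>_. lborel)) (Pi\<^sub>M (insert i I) (\<lambda>_. lborel))" for u
    using insert.hyps by measurable
  have "(\<integral>\<^sup>+s. ?section f s \<partial>lborel) * (\<integral>\<^sup>+s. ?section g s \<partial>lborel) \<le> (\<integral>\<^sup>+s. ?section k s \<partial>lborel) ^ 2"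
  proof (rule prekopa_leindler_real)
    fix s t :: real
    show "?section f s * ?section g t \<le> ?section k ((s + t) / 2) ^ 2"
    proof (rule insert.IH)
      fix x y :: "'i \<Rightarrow> real" assume "x \<in> space (Pi\<^sub>M I (\<lambda>_. lborel))" "y \<in> space (Pi\<^sub>M I (\<lambda>_. lborel))"
      then have "x(i := s) \<in> space (Pi\<^sub>M (insert i I) (\<lambda>_. lborel))"
          "y(i := t) \<in> space (Pi\<^sub>M (insert i I) (\<lambda>_. lborel))"
        unfolding space_PiM by (auto intro!: PiE_fun_upd)
      moreover have "restrict (\<lambda>j. ((x(i := s)) j + (y(i := t)) j) / 2) (insert i I)
          = (restrict (\<lambda>j. (x j + y j) / 2) I)(i := (s + t) / 2)"
        using insert.hyps(2) by (auto simp: fun_eq_iff restrict_def)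
      ultimately show "f (x(i := s)) * g (y(i := t)) \<le> k ((restrict (\<lambda>j. (x j + y j) / 2) I)(i := (s + t) / 2)) ^ 2"
        using insert.prems(4) by metis
    qed measurable
  qed measurable
  then show ?case
    using insert.hyps by (simp add: product_nn_integral_insert_rev)
qed

lemma prekopa_leindler:
  fixes f g k :: "'a::euclidean_space \<Rightarrow> ennreal"
  assumes [measurable]: "f \<in> borel_measurable borel" "g \<in> borel_measurable borel" "k \<in> borel_measurable borel"
    and mid: "\<And>x y. f x * g y \<le> k ((x + y) /\<^sub>R 2) ^ 2"
  shows "(\<integral>\<^sup>+x. f x \<partial>lborel) * (\<integral>\<^sup>+x. g x \<partial>lborel) \<le> (\<integral>\<^sup>+x. k x \<partial>lborel) ^ 2"
proof -
  define S :: "('a \<Rightarrow> real) \<Rightarrow> 'a" where "S h = (\<Sum>b\<in>Basis. h b *\<^sub>R b)" for h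
  have [measurable]: "S \<in> borel_measurable (Pi\<^sub>M Basis (\<lambda>_. lborel))"
    unfolding S_def by measurable
  have coordinates: "(\<integral>\<^sup>+x. h x \<partial>lborel) = (\<integral>\<^sup>+x. h (S x) \<partial>Pi\<^sub>M Basis (\<lambda>_. lborel))"
    if [measurable]: "h \<in> borel_measurable borel" for h :: "'a \<Rightarrow> ennreal"
    by (subst lborel_eq) (simp add: nn_integral_distr S_def)
  have "(\<integral>\<^sup>+x. f (S x) \<partial>Pi\<^sub>M Basis (\<lambda>_. lborel)) * (\<integral>\<^sup>+x. g (S x) \<partial>Pi\<^sub>M Basis (\<lambda>_. lborel))
      \<le> (\<integral>\<^sup>+x. k (S x) \<partial>Pi\<^sub>M Basis (\<lambda>_. lborel)) ^ 2"
  proof (rule prekopa_leindler_PiM[OF finite_Basis])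
    fix x y :: "'a \<Rightarrow> real"
    have "S (restrict (\<lambda>j. (x j + y j) / 2) Basis) = (\<Sum>b\<in>Basis. ((x b + y b) / 2) *\<^sub>R b)"
      unfolding S_def by (rule sum.cong) auto
    also have "\<dots> = (\<Sum>b\<in>Basis. (1/2) *\<^sub>R (x b *\<^sub>R b) + (1/2) *\<^sub>R (y b *\<^sub>R b))"
      by (rule sum.cong) (auto simp: scaleR_add_left[symmetric] add_divide_distrib)
    also have "\<dots> = (S x + S y) /\<^sub>R 2"
      by (simp add: S_def sum.distrib scaleR_sum_right scaleR_add_right)
    finally show "f (S x) * g (S y) \<le> k (S (restrict (\<lambda>j. (x j + y j) / 2) Basis)) ^ 2"
      using mid by simp
  qed measurable
  then show ?thesis
    by (simp add: coordinates)
qed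

section \<open>The standard Gaussian\<close>

lemma nn_integral_exp_neg_square_half:
  "(\<integral>\<^sup>+x. ennreal (exp (- (x ^ 2) / 2)) \<partial>lborel) = ennreal (sqrt (2 * pi))"
proof -
  have "(\<integral>\<^sup>+x. ennreal (exp (- (x ^ 2) / 2)) \<partial>lborel)
      = (\<integral>\<^sup>+x. ennreal (sqrt (2 * pi)) * ennreal (std_normal_density x) \<partial>lborel)"
    by (intro nn_integral_cong) (simp add: std_normal_density_def flip: ennreal_mult)
  also have "\<dots> = ennreal (sqrt (2 * pi))"
    by (simp add: nn_integral_cmult nn_integral_eq_integral)
  finally show ?thesis .
qed

lemma nn_integral_exp_neg_norm_square_half:
  "(\<integral>\<^sup>+x. ennreal (exp (- (norm x)\<^sup>2 / 2)) \<partial>(lborel :: 'a::euclidean_space measure))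
     = ennreal ((2 * pi) powr (real DIM('a) / 2))"
proof -
  have factor: "ennreal (exp (- (norm x)\<^sup>2 / 2)) = (\<Prod>b\<in>Basis. ennreal (exp (- ((x \<bullet> b) ^ 2) / 2)))"
    for x :: 'a
  proof -
    have "(norm x)\<^sup>2 = (\<Sum>b\<in>Basis. (x \<bullet> b) ^ 2)"
      unfolding power2_norm_eq_inner by (subst euclidean_inner) (simp add: power2_eq_square)
    then have "- (norm x)\<^sup>2 / 2 = (\<Sum>b\<in>Basis. - ((x \<bullet> b) ^ 2) / 2)"
      by (simp add: sum_divide_distrib sum_negf)
    then show ?thesis
      by (simp add: exp_sum prod_ennreal)
  qed
  have "(\<integral>\<^sup>+x. ennreal (exp (- (norm x)\<^sup>2 / 2)) \<partial>(lborel :: 'a measure))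
      = (\<integral>\<^sup>+x. (\<Prod>b\<in>Basis. ennreal (exp (- ((x \<bullet> b) ^ 2) / 2))) \<partial>(lborel :: 'a measure))"
    by (simp only: factor)
  also have "\<dots> = (\<Prod>b\<in>(Basis :: 'a set). \<integral>\<^sup>+x. ennreal (exp (- (x ^ 2) / 2)) \<partial>lborel)"
    by (rule nn_integral_lborel_prod[where f = "\<lambda>b x. ennreal (exp (- (x ^ 2) / 2))"]) auto
  also have "\<dots> = ennreal (sqrt (2 * pi)) ^ DIM('a)"
    by (simp only: nn_integral_exp_neg_square_half prod_constant)
  also have "\<dots> = ennreal (sqrt (2 * pi) ^ DIM('a))"
    by (simp add: ennreal_power)
  also have "sqrt (2 * pi) ^ DIM('a) = (2 * pi) powr (real DIM('a) / 2)"
    by (simp add: powr_half_sqrt[symmetric] powr_power)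
  finally show ?thesis .
qed

lemma sets_std_gaussian[simp, measurable_cong]:
  "sets (std_gaussian :: 'a::euclidean_space measure) = sets borel"
  by (simp add: std_gaussian_def)

lemma nn_integral_std_gaussian_exp:
  fixes u :: "'a::euclidean_space \<Rightarrow> real"
  assumes [measurable]: "u \<in> borel_measurable borel"
  shows "(\<integral>\<^sup>+x. ennreal (exp (u x)) \<partial>std_gaussian)
    = ennreal ((2 * pi) powr (- real DIM('a) / 2)) * (\<integral>\<^sup>+x. ennreal (exp (u x - (norm x)\<^sup>2 / 2)) \<partial>lborel)"
proof -
  have "(\<integral>\<^sup>+x. ennreal (exp (u x)) \<partial>std_gaussian)
      = (\<integral>\<^sup>+x. ennreal ((2 * pi) powr (- real DIM('a) / 2)) * ennreal (exp (u x - (norm x)\<^sup>2 / 2)) \<partial>lborel)"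
    unfolding std_gaussian_def
  proof (subst nn_integral_density, (simp; fail)+, intro nn_integral_cong)
    fix x :: 'a
    have "exp (- (norm x)\<^sup>2 / 2) * exp (u x) = exp (u x - (norm x)\<^sup>2 / 2)"
      by (simp add: exp_add[symmetric])
    then show "ennreal ((2 * pi) powr (- real DIM('a) / 2) * exp (- (norm x)\<^sup>2 / 2)) * ennreal (exp (u x))
        = ennreal ((2 * pi) powr (- real DIM('a) / 2)) * ennreal (exp (u x - (norm x)\<^sup>2 / 2))"
      by (simp add: mult.assoc flip: ennreal_mult)
  qed
  also have "\<dots> = ennreal ((2 * pi) powr (- real DIM('a) / 2)) * (\<integral>\<^sup>+x. ennreal (exp (u x - (norm x)\<^sup>2 / 2)) \<partial>lborel)"
    by (rule nn_integral_cmult) measurable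
  finally show ?thesis .
qed

lemma std_gaussian_normalization:
  "ennreal ((2 * pi) powr (- real DIM('a) / 2)) * ennreal ((2 * pi) powr (real DIM('a::euclidean_space) / 2)) = 1"
  by (simp add: powr_add[symmetric] flip: ennreal_mult)

lemma prob_space_std_gaussian: "prob_space (std_gaussian :: 'a::euclidean_space measure)"
proof
  have "emeasure (std_gaussian :: 'a measure) (space (std_gaussian :: 'a measure))
      = (\<integral>\<^sup>+x. ennreal (exp 0) \<partial>(std_gaussian :: 'a measure))"
    by simp
  also have "\<dots> = ennreal ((2 * pi) powr (- real DIM('a) / 2))
      * (\<integral>\<^sup>+x. ennreal (exp (0 - (norm x)\<^sup>2 / 2)) \<partial>(lborel :: 'a measure))"
    by (rule nn_integral_std_gaussian_exp) simp
  also have "(\<integral>\<^sup>+x. ennreal (exp (0 - (norm x)\<^sup>2 / 2)) \<partial>(lborel :: 'a measure))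
      = ennreal ((2 * pi) powr (real DIM('a) / 2))"
    using nn_integral_exp_neg_norm_square_half[where 'a = 'a] by simp
  also have "ennreal ((2 * pi) powr (- real DIM('a) / 2)) * \<dots> = 1"
    by (rule std_gaussian_normalization)
  finally show "emeasure (std_gaussian :: 'a measure) (space std_gaussian) = 1" .
qed

lemma nn_integral_std_gaussian_exp_inner:
  fixes c :: "'a::euclidean_space"
  shows "(\<integral>\<^sup>+x. ennreal (exp (c \<bullet> x)) \<partial>std_gaussian) = ennreal (exp ((norm c)\<^sup>2 / 2))"
proof -
  have complete_square: "c \<bullet> x - (norm x)\<^sup>2 / 2 = (norm c)\<^sup>2 / 2 + - (norm (x - c))\<^sup>2 / 2" for x
    by (simp add: power2_norm_eq_inner inner_diff_left inner_diff_right inner_commute field_simps)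
  have "(\<integral>\<^sup>+x. ennreal (exp (c \<bullet> x - (norm x)\<^sup>2 / 2)) \<partial>(lborel :: 'a measure))
      = (\<integral>\<^sup>+x. ennreal (exp ((norm c)\<^sup>2 / 2)) * ennreal (exp (- (norm (x - c))\<^sup>2 / 2)) \<partial>lborel)"
    unfolding complete_square exp_add by (simp add: ennreal_mult)
  also have "\<dots> = ennreal (exp ((norm c)\<^sup>2 / 2)) * (\<integral>\<^sup>+x. ennreal (exp (- (norm (x - c))\<^sup>2 / 2)) \<partial>lborel)"
    by (rule nn_integral_cmult) measurable
  also have "(\<integral>\<^sup>+x. ennreal (exp (- (norm (x - c))\<^sup>2 / 2)) \<partial>(lborel :: 'a measure))
      = (\<integral>\<^sup>+x. ennreal (exp (- (norm (x - c))\<^sup>2 / 2)) \<partial>distr lborel borel ((+) c))"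
    by (simp add: lborel_distr_plus)
  also have "\<dots> = ennreal ((2 * pi) powr (real DIM('a) / 2))"
    using nn_integral_exp_neg_norm_square_half[where 'a = 'a] by (simp add: nn_integral_distr)
  finally show ?thesis
    using std_gaussian_normalization[where 'a = 'a]
    by (simp add: nn_integral_std_gaussian_exp mult.left_commute)
qed

lemma maurey_std_gaussian:
  fixes F H :: "'a::euclidean_space \<Rightarrow> real"
  assumes [measurable]: "F \<in> borel_measurable borel" "H \<in> borel_measurable borel"
    and H_le: "\<And>x y. H x \<le> (norm (x - y))\<^sup>2 / 4 + F y"
  shows "(\<integral>\<^sup>+x. ennreal (exp (H x)) \<partial>std_gaussian) * (\<integral>\<^sup>+x. ennreal (exp (- F x)) \<partial>std_gaussian) \<le> 1"
proof -
  define K where "K = ennreal ((2 * pi) powr (- real DIM('a) / 2))"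
  let ?\<phi> = "\<lambda>x::'a. ennreal (exp (H x - (norm x)\<^sup>2 / 2))"
  let ?\<psi> = "\<lambda>x::'a. ennreal (exp (- F x - (norm x)\<^sup>2 / 2))"
  let ?\<gamma> = "\<lambda>x::'a. ennreal (exp (- (norm x)\<^sup>2 / 2))"
  have "(\<integral>\<^sup>+x. ?\<phi> x \<partial>lborel) * (\<integral>\<^sup>+x. ?\<psi> x \<partial>lborel) \<le> (\<integral>\<^sup>+x. ?\<gamma> x \<partial>lborel) ^ 2"
  proof (rule prekopa_leindler)
    fix x y :: 'a
    have parallelogram: "(norm (x - y))\<^sup>2 / 4 - (norm x)\<^sup>2 / 2 - (norm y)\<^sup>2 / 2 = - (norm (x + y))\<^sup>2 / 4"
      by (simp add: power2_norm_eq_inner inner_diff_left inner_diff_right inner_add_left inner_add_right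
          inner_commute field_simps)
    have "H x - (norm x)\<^sup>2 / 2 + (- F y - (norm y)\<^sup>2 / 2) \<le> 2 * (- (norm ((x + y) /\<^sub>R 2))\<^sup>2 / 2)"
      using H_le[of x y] parallelogram by (simp add: power2_eq_square)
    then have "exp (H x - (norm x)\<^sup>2 / 2) * exp (- F y - (norm y)\<^sup>2 / 2) \<le> exp (- (norm ((x + y) /\<^sub>R 2))\<^sup>2 / 2) ^ 2"
      by (simp add: exp_add[symmetric] exp_of_nat_mult[symmetric])
    then show "?\<phi> x * ?\<psi> y \<le> ?\<gamma> ((x + y) /\<^sub>R 2) ^ 2"
      by (simp add: ennreal_mult[symmetric] ennreal_power)
  qed measurable
  then have "K * (\<integral>\<^sup>+x. ?\<phi> x \<partial>lborel) * (K * (\<integral>\<^sup>+x. ?\<psi> x \<partial>lborel)) \<le> (K * (\<integral>\<^sup>+x. ?\<gamma> x \<partial>lborel)) ^ 2"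
    by (simp add: power2_eq_square mult_ac mult_left_mono)
  also have "K * (\<integral>\<^sup>+x. ?\<gamma> x \<partial>lborel) = 1"
    unfolding K_def nn_integral_exp_neg_norm_square_half by (rule std_gaussian_normalization)
  finally show ?thesis
    by (simp add: K_def nn_integral_std_gaussian_exp)
qed

lemma borel_measurable_linear:
  fixes A :: "'a::euclidean_space \<Rightarrow> 'b::euclidean_space"
  assumes "linear A"
  shows "A \<in> borel_measurable borel"
  using assms by (intro borel_measurable_continuous_onI linear_continuous_on) (simp add: linear_conv_bounded_linear)

lemma mgf_symmetrization:
  fixes \<mu> :: "'a::euclidean_space measure"
  assumes "prob_space \<mu>" and sets_\<mu>[measurable_cong]: "sets \<mu> = sets borel"
  shows "mgf (symmetrization \<mu>) y = mgf \<mu> y * mgf \<mu> (- y)"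
proof -
  have [measurable_cong]: "sets (reflect \<mu>) = sets borel"
    by (simp add: reflect_def)
  interpret \<rho>: sigma_finite_measure "reflect \<mu>"
    unfolding reflect_def
    by (intro prob_space_imp_sigma_finite prob_space.prob_space_distr[OF assms(1)]) measurable
  have "mgf (symmetrization \<mu>) y = (\<integral>\<^sup>+p. ennreal (exp (y \<bullet> (fst p + snd p))) \<partial>(\<mu> \<Otimes>\<^sub>M reflect \<mu>))"
    unfolding mgf_def symmetrization_def by (subst nn_integral_distr) (auto simp: split_beta')
  also have "\<dots> = (\<integral>\<^sup>+x. \<integral>\<^sup>+z. ennreal (exp (y \<bullet> x)) * ennreal (exp (y \<bullet> z)) \<partial>reflect \<mu> \<partial>\<mu>)"
    by (subst \<rho>.nn_integral_fst[symmetric]) (auto simp: inner_add_right exp_add ennreal_mult)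
  also have "\<dots> = (\<integral>\<^sup>+x. ennreal (exp (y \<bullet> x)) * mgf (reflect \<mu>) y \<partial>\<mu>)"
    unfolding mgf_def by (subst nn_integral_cmult) auto
  also have "\<dots> = mgf \<mu> y * mgf (reflect \<mu>) y"
    unfolding mgf_def by (rule nn_integral_multc) measurable
  also have "mgf (reflect \<mu>) y = mgf \<mu> (- y)"
    unfolding mgf_def reflect_def by (subst nn_integral_distr) auto
  finally show ?thesis .
qed

lemma mgf_affine_std_gaussian:
  fixes A :: "'a::euclidean_space \<Rightarrow> 'b::euclidean_space"
  assumes "linear A"
  shows "mgf (distr std_gaussian borel (\<lambda>u. A u + b)) y = ennreal (exp (y \<bullet> b + (norm (adjoint A y))\<^sup>2 / 2))"
proof -
  have [measurable]: "A \<in> borel_measurable borel"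
    using assms by (rule borel_measurable_linear)
  have "mgf (distr std_gaussian borel (\<lambda>u. A u + b)) y
      = (\<integral>\<^sup>+u. ennreal (exp (y \<bullet> b)) * ennreal (exp (adjoint A y \<bullet> u)) \<partial>(std_gaussian :: 'a measure))"
    unfolding mgf_def
    by (subst nn_integral_distr)
      (auto simp: adjoint_clauses[OF assms] inner_add_right exp_add ennreal_mult mult.commute)
  also have "\<dots> = ennreal (exp (y \<bullet> b)) * ennreal (exp ((norm (adjoint A y))\<^sup>2 / 2))"
    by (subst nn_integral_cmult) (auto simp: nn_integral_std_gaussian_exp_inner)
  finally show ?thesis
    by (simp add: exp_add ennreal_mult)
qed

lemma cramer_symmetrization_affine_std_gaussian_le:
  fixes A :: "'a::euclidean_space \<Rightarrow> 'b::euclidean_space"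
  assumes A: "linear A"
  shows "cramer (symmetrization (distr std_gaussian borel (\<lambda>u. A u + b))) (A w) \<le> ereal ((norm w)\<^sup>2 / 4)"
  unfolding cramer_def
proof (rule SUP_least)
  fix y :: 'b
  let ?\<mu> = "distr (std_gaussian :: 'a measure) borel (\<lambda>u. A u + b)"
  have [measurable]: "A \<in> borel_measurable borel"
    using A by (rule borel_measurable_linear)
  have "prob_space ?\<mu>"
    by (intro prob_space.prob_space_distr prob_space_std_gaussian) measurable
  then have "mgf (symmetrization ?\<mu>) y = ennreal (exp ((norm (adjoint A y))\<^sup>2))"
    using adjoint_linear[OF A]
    by (simp add: mgf_symmetrization mgf_affine_std_gaussian[OF A] linear_neg
        flip: ennreal_mult exp_add)
  then have "log_mgf (symmetrization ?\<mu>) y = ereal ((norm (adjoint A y))\<^sup>2)"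
    by (simp add: log_mgf_def)
  moreover have "w \<bullet> z - (norm z)\<^sup>2 \<le> (norm w)\<^sup>2 / 4" for z :: 'a
  proof -
    have "0 \<le> (norm (w - 2 *\<^sub>R z))\<^sup>2"
      by simp
    also have "(norm (w - 2 *\<^sub>R z))\<^sup>2 = (norm w)\<^sup>2 - 4 * (w \<bullet> z) + 4 * (norm z)\<^sup>2"
      by (simp add: power2_norm_eq_inner inner_diff_left inner_diff_right inner_commute algebra_simps)
    finally show ?thesis
      by simp
  qed
  ultimately show "ereal (A w \<bullet> y) - log_mgf (symmetrization ?\<mu>) y \<le> ereal ((norm w)\<^sup>2 / 4)"
    by (simp add: adjoint_clauses[OF A, symmetric])
qed

section \<open>Property \<open>(\<tau>)\<close> for Gaussian measures\<close>

definition quadratic_inf_conv :: "('a::real_normed_vector \<Rightarrow> real) \<Rightarrow> 'a \<Rightarrow> real" where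
  "quadratic_inf_conv F u = (INF v. (norm (u - v))\<^sup>2 / 4 + F v)"

lemma bdd_below_quadratic_inf_conv:
  assumes "bdd_below (range F)"
  shows "bdd_below (range (\<lambda>v. (norm (u - v))\<^sup>2 / 4 + F v))"
proof -
  obtain m where "\<And>v. m \<le> F v"
    using assms by (auto simp: bdd_below_def)
  then have "\<And>v. m \<le> (norm (u - v))\<^sup>2 / 4 + F v"
    by (intro add_increasing) simp_all
  then show ?thesis
    by (intro bdd_belowI2)
qed

lemma quadratic_inf_conv_le:
  assumes "bdd_below (range F)"
  shows "quadratic_inf_conv F u \<le> (norm (u - v))\<^sup>2 / 4 + F v"
  unfolding quadratic_inf_conv_def using bdd_below_quadratic_inf_conv[OF assms] by (rule cINF_lower) simp

lemma borel_measurable_quadratic_inf_conv: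
  fixes F :: "'a::euclidean_space \<Rightarrow> real"
  assumes "bdd_below (range F)"
  shows "quadratic_inf_conv F \<in> borel_measurable borel"
proof (subst borel_measurable_iff_less, intro allI)
  fix a :: real
  have "{u \<in> space borel. quadratic_inf_conv F u < a} = (\<Union>v. {u. (norm (u - v))\<^sup>2 / 4 + F v < a})"
    unfolding quadratic_inf_conv_def using cInf_less_iff[OF _ bdd_below_quadratic_inf_conv[OF assms]] by auto
  also have "\<dots> \<in> sets borel"
    by (intro borel_open open_UN ballI open_Collect_less) (auto intro!: continuous_intros)
  finally show "{u \<in> space borel. quadratic_inf_conv F u < a} \<in> sets borel" .
qed

lemma quadratic_inf_conv_add_period:
  assumes period: "\<And>v. F (v + k) = F v"
  shows "quadratic_inf_conv F (u + k) = quadratic_inf_conv F u"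
proof -
  have "range (\<lambda>v. (norm (u + k - v))\<^sup>2 / 4 + F v) = range (\<lambda>v. (norm (u - v))\<^sup>2 / 4 + F v)"
  proof (intro equalityI subsetI; elim rangeE)
    fix v x
    show "x = (norm (u + k - v))\<^sup>2 / 4 + F v \<Longrightarrow> x \<in> range (\<lambda>v. (norm (u - v))\<^sup>2 / 4 + F v)"
      using period[of "v - k"] by (intro image_eqI[of _ _ "v - k"]) (simp_all add: algebra_simps)
    show "x = (norm (u - v))\<^sup>2 / 4 + F v \<Longrightarrow> x \<in> range (\<lambda>v. (norm (u + k - v))\<^sup>2 / 4 + F v)"
      using period[of v] by (intro image_eqI[of _ _ "v + k"]) (simp_all add: algebra_simps)
  qed
  then show ?thesis
    by (simp add: quadratic_inf_conv_def)
qed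

lemma eexp_le_exp: "t \<le> ereal r \<Longrightarrow> eexp t \<le> ennreal (exp r)"
  unfolding eexp_def by (cases t) auto

lemma outer_nn_integral_le_nn_integral:
  assumes "g \<in> borel_measurable M" "\<And>x. x \<in> space M \<Longrightarrow> f x \<le> g x"
  shows "outer_nn_integral M f \<le> (\<integral>\<^sup>+x. g x \<partial>M)"
  unfolding outer_nn_integral_def using assms by (intro INF_lower) auto

text \<open>The majorant is \<open>\<infinity>\<close> off the closed affine range and is read off through a right inverse
  of \<open>A\<close> on it; periodicity along the kernel of \<open>A\<close> makes the choice of preimage irrelevant.\<close>

lemma outer_nn_integral_distr_affine_le:
  fixes A :: "'a::euclidean_space \<Rightarrow> 'b::euclidean_space" and h :: "'b \<Rightarrow> ennreal"
  assumes A: "linear A" and sets_\<nu>: "sets \<nu> = sets borel" and [measurable]: "H \<in> borel_measurable borel"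
    and H_period: "\<And>u k. A k = 0 \<Longrightarrow> H (u + k) = H u"
    and h_le: "\<And>u. h (A u + b) \<le> ennreal (exp (H u))"
  shows "outer_nn_integral (distr \<nu> borel (\<lambda>u. A u + b)) h \<le> (\<integral>\<^sup>+u. ennreal (exp (H u)) \<partial>\<nu>)"
proof -
  have [measurable]: "A \<in> borel_measurable borel"
    using A by (rule borel_measurable_linear)
  obtain B where "linear B" and AB: "\<And>v. v \<in> range A \<Longrightarrow> A (B v) = v"
    using real_vector.linear_exists_right_inverse_on[OF A subspace_UNIV] by auto
  have [measurable]: "B \<in> borel_measurable borel"
    using \<open>linear B\<close> by (rule borel_measurable_linear)
  define S where "S = {x. x - b \<in> range A}"
  have "closed (range A)"
    by (rule closed_subspace[OF real_vector.linear_subspace_image[OF A subspace_UNIV]])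
  then have "range A \<in> sets borel"
    by (rule borel_closed)
  then have [measurable]: "S \<in> sets borel"
    using measurable_sets[of "\<lambda>x. x - b" borel borel "range A"] by (simp add: S_def vimage_def)
  define g where "g x = (if x \<in> S then ennreal (exp (H (B (x - b)))) else \<infinity>)" for x
  have [measurable]: "g \<in> borel_measurable borel"
    unfolding g_def by measurable
  have "h x \<le> g x" for x
  proof (cases "x \<in> S")
    case True
    then have "A (B (x - b)) + b = x"
      using AB by (simp add: S_def)
    then show ?thesis
      using h_le[of "B (x - b)"] True by (simp add: g_def)
  qed (simp add: g_def)
  then have "outer_nn_integral (distr \<nu> borel (\<lambda>u. A u + b)) h \<le> (\<integral>\<^sup>+x. g x \<partial>distr \<nu> borel (\<lambda>u. A u + b))"
    by (intro outer_nn_integral_le_nn_integral) auto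
  also have "\<dots> = (\<integral>\<^sup>+u. g (A u + b) \<partial>\<nu>)"
    by (intro nn_integral_distr) (simp_all add: measurable_cong_sets[OF sets_\<nu> refl])
  also have "\<dots> = (\<integral>\<^sup>+u. ennreal (exp (H u)) \<partial>\<nu>)"
  proof (intro nn_integral_cong)
    fix u
    have "A (B (A u) - u) = 0"
      using AB[of "A u"] by (simp add: real_vector.linear_diff[OF A])
    then have "H (B (A u)) = H u"
      using H_period[of "B (A u) - u" u] by simp
    then show "g (A u + b) = ennreal (exp (H u))"
      by (simp add: g_def S_def)
  qed
  finally show ?thesis .
qed

lemma property_tau_affine_std_gaussian:
  fixes A :: "'a::euclidean_space \<Rightarrow> 'b::euclidean_space" and W :: "'b \<Rightarrow> ereal"
  assumes A: "linear A" and W_le: "\<And>w. W (A w) \<le> ereal ((norm w)\<^sup>2 / 4)"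
  shows "property_tau (distr std_gaussian borel (\<lambda>u. A u + b)) W"
  unfolding property_tau_def
proof (intro allI impI)
  fix f :: "'b \<Rightarrow> real"
  assume [measurable]: "f \<in> borel_measurable borel" and "bounded (range f)"
  have [measurable]: "A \<in> borel_measurable borel"
    using A by (rule borel_measurable_linear)
  define F where "F u = f (A u + b)" for u
  have [measurable]: "F \<in> borel_measurable borel"
    unfolding F_def by measurable
  obtain M where M: "\<And>y. \<bar>f y\<bar> \<le> M"
    using \<open>bounded (range f)\<close> unfolding bounded_iff by auto
  have "- M \<le> F v" for v
    using M[of "A v + b"] unfolding F_def by linarith
  then have "bdd_below (range F)"
    by (intro bdd_belowI2)
  note H = quadratic_inf_conv_le[OF this] borel_measurable_quadratic_inf_conv[OF this]
  have inf_conv_le: "inf_conv W (\<lambda>y. ereal (f y)) (A u + b) \<le> ereal (quadratic_inf_conv F u)" for u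
  proof -
    have "inf_conv W (\<lambda>y. ereal (f y)) (A u + b) \<le> ereal ((norm (u - v))\<^sup>2 / 4 + F v)" for v
    proof -
      have "inf_conv W (\<lambda>y. ereal (f y)) (A u + b) \<le> W (A (u - v)) + ereal (f (A v + b))"
        unfolding inf_conv_def by (rule INF_lower2[of "A v + b"]) (simp_all add: linear_diff[OF A])
      also have "\<dots> \<le> ereal ((norm (u - v))\<^sup>2 / 4 + F v)"
        using add_right_mono[OF W_le, of "u - v" "ereal (F v)"] by (simp add: F_def)
      finally show ?thesis .
    qed
    then show ?thesis
      unfolding quadratic_inf_conv_def
      by (subst ereal_Inf') (auto intro: INF_greatest bdd_below_quadratic_inf_conv[OF \<open>bdd_below (range F)\<close>])
  qed
  have "outer_nn_integral (distr std_gaussian borel (\<lambda>u. A u + b)) (\<lambda>x. eexp (inf_conv W (\<lambda>y. ereal (f y)) x))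
      \<le> (\<integral>\<^sup>+u. ennreal (exp (quadratic_inf_conv F u)) \<partial>std_gaussian)"
  proof (rule outer_nn_integral_distr_affine_le[OF A _ H(2)])
    show "quadratic_inf_conv F (u + k) = quadratic_inf_conv F u" if "A k = 0" for u k
      by (rule quadratic_inf_conv_add_period) (simp add: F_def linear_add[OF A] that)
  qed (simp_all add: eexp_le_exp[OF inf_conv_le])
  moreover have "(\<integral>\<^sup>+x. ennreal (exp (- f x)) \<partial>distr std_gaussian borel (\<lambda>u. A u + b))
      = (\<integral>\<^sup>+u. ennreal (exp (- F u)) \<partial>(std_gaussian :: 'a measure))"
    unfolding F_def by (rule nn_integral_distr) measurable
  ultimately have "outer_nn_integral (distr std_gaussian borel (\<lambda>u. A u + b)) (\<lambda>x. eexp (inf_conv W (\<lambda>y. ereal (f y)) x))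
      * (\<integral>\<^sup>+x. ennreal (exp (- f x)) \<partial>distr std_gaussian borel (\<lambda>u. A u + b))
      \<le> (\<integral>\<^sup>+u. ennreal (exp (quadratic_inf_conv F u)) \<partial>std_gaussian) * (\<integral>\<^sup>+u. ennreal (exp (- F u)) \<partial>std_gaussian)"
    by (simp add: mult_right_mono)
  also have "\<dots> \<le> 1"
    by (intro maurey_std_gaussian H) measurable
  finally show "outer_nn_integral (distr std_gaussian borel (\<lambda>u. A u + b)) (\<lambda>x. eexp (inf_conv W (\<lambda>y. ereal (f y)) x))
      * (\<integral>\<^sup>+x. ennreal (exp (- f x)) \<partial>distr std_gaussian borel (\<lambda>u. A u + b)) \<le> 1" .
qed

theorem theorem1:
  fixes \<mu> :: "'a::euclidean_space measure"
  assumes "gaussian \<mu>"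
  shows "IC 1 \<mu>"
proof -
  obtain A b where A: "linear A" and \<mu>: "\<mu> = distr (std_gaussian :: 'a measure) borel (\<lambda>x. A x + b)"
    using assms unfolding gaussian_def by blast
  have [measurable]: "A \<in> borel_measurable borel"
    using A by (rule borel_measurable_linear)
  have "prob_space \<mu>"
    unfolding \<mu> by (rule prob_space.prob_space_distr[OF prob_space_std_gaussian]) measurable
  moreover have "property_tau \<mu> (\<lambda>x. cramer (symmetrization \<mu>) (x /\<^sub>R 1))"
    unfolding \<mu> using cramer_symmetrization_affine_std_gaussian_le[OF A]
    by (intro property_tau_affine_std_gaussian[OF A]) simp
  ultimately show ?thesis
    unfolding IC_def by (simp add: \<mu>)
qed

end
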